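(* Let $G_n$, $m$, $g$ and $\alpha$ be as in the context. Let $(u,v)$ be an arc of $G_n$ with $u\neq m$ and $v\neq m$, and let $l(uv)$ denote its label. Then $l(uv)\leq \alpha(u)$. Moreover, if $l(uv)<\alpha(u)$ then $g(v)=\varepsilon$, and if $l(uv)=\alpha(u)$ then $g(v)=g(u)\,l(uv)$.
   Context: Let $A$ be a finite alphabet with a linear order $<$, extended to the lexicographic order on words: $x<y$ if $x$ is a proper prefix of $y$, or $x=uav$, $y=ubw$ with $a,b\in A$, $a<b$. Let $\mathcal{F}$ be a set of words over $A$ (forbidden words). A word $w$ is in the language if the bi-infinite periodic sequence $\cdots www\cdots$ contains no element of $\mathcal{F}$ as a factor; $W_k$ denotes the set of words of length $k$ in the language. Fix $n\geq 1$ and consider the digraph with vertex set $A^n$ and arcs $(as,sb)$ for $a,b\in A$, $s\in A^{n-1}$, $asb\in W_{n+1}$, the label of $(as,sb)$ being $b$. The de Bruijn graph of span $n$, $G_n$, is a strongly connected component of maximum size of this digraph; vertices are identified with their words. Let $m=m_1\cdots m_n$ be the vertex of $G_n$ whose word is lexicographically largest. For a vertex $u\neq m$, $g(u)$ is the longest word which is both a prefix of $m$ and a suffix of $u$ (possibly the empty word $\varepsilon$; necessarily $|g(u)|<n$), and $\alpha(u)=m_{|g(u)|+1}$. *)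

theory Defs
  imports Main "HOL-Library.Sublist"
begin

text \<open>f is a factor of the bi-infinite periodic sequence ... w w w ...\<close>
definition occurs_periodic :: "'a list \<Rightarrow> 'a list \<Rightarrow> bool" where
  "occurs_periodic f w \<longleftrightarrow> (\<exists>i::nat. \<forall>j<length f. f ! j = w ! ((i + j) mod length w))"

definition in_lang :: "'a list set \<Rightarrow> 'a list \<Rightarrow> bool" where
  "in_lang F w \<longleftrightarrow> (\<forall>f\<in>F. \<not> occurs_periodic f w)"

definition W :: "'a set \<Rightarrow> 'a list set \<Rightarrow> nat \<Rightarrow> 'a list set" where
  "W A F k = {w. length w = k \<and> set w \<subseteq> A \<and> in_lang F w}"

definition vert :: "'a set \<Rightarrow> nat \<Rightarrow> 'a list set" where
  "vert A n = {w. length w = n \<and> set w \<subseteq> A}"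

text \<open>Arc (a s, s b) of the span-n digraph, present iff a s b is in W_{n+1}; its label is b = last v.\<close>
definition arc :: "'a set \<Rightarrow> 'a list set \<Rightarrow> nat \<Rightarrow> 'a list \<Rightarrow> 'a list \<Rightarrow> bool" where
  "arc A F n u v \<longleftrightarrow> u \<in> vert A n \<and> v \<in> vert A n \<and> tl u = butlast v
      \<and> u @ [last v] \<in> W A F (Suc n)"

definition arcs :: "'a set \<Rightarrow> 'a list set \<Rightarrow> nat \<Rightarrow> ('a list \<times> 'a list) set" where
  "arcs A F n = {(u, v). arc A F n u v}"

definition strongly_connected_set :: "'a set \<Rightarrow> 'a list set \<Rightarrow> nat \<Rightarrow> 'a list set \<Rightarrow> bool" where
  "strongly_connected_set A F n C \<longleftrightarrow> C \<subseteq> vert A n \<and>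
     (\<forall>u\<in>C. \<forall>v\<in>C. (u, v) \<in> (arcs A F n)\<^sup>*)"

definition scc :: "'a set \<Rightarrow> 'a list set \<Rightarrow> nat \<Rightarrow> 'a list set \<Rightarrow> bool" where
  "scc A F n C \<longleftrightarrow> C \<noteq> {} \<and> strongly_connected_set A F n C \<and>
     (\<forall>D. strongly_connected_set A F n D \<and> C \<subseteq> D \<longrightarrow> D = C)"

text \<open>C is (the vertex set of) a de Bruijn graph G_n: an SCC of maximum size.\<close>
definition is_G :: "'a set \<Rightarrow> 'a list set \<Rightarrow> nat \<Rightarrow> 'a list set \<Rightarrow> bool" where
  "is_G A F n C \<longleftrightarrow> scc A F n C \<and> (\<forall>D. scc A F n D \<longrightarrow> card D \<le> card C)"

definition g :: "'a list \<Rightarrow> 'a list \<Rightarrow> 'a list" where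
  "g m u = (ARG_MAX length x. prefix x m \<and> suffix x u)"

definition alpha :: "'a list \<Rightarrow> 'a list \<Rightarrow> 'a" where
  "alpha m u = m ! length (g m u)"

end

theory Submission
  imports Defs
begin

text \<open>Every word of the component C has a successor in C, so every factor of a word of C is a
  prefix of some word of C; as m is lexicographically largest, a factor p c of a word of C with
  p a a prefix of m must have c \<le> a. Write v = tl u @ [b] and s = g(u). Then s b is a suffix
  of v, which gives b \<le> \<alpha>(u). A nonempty g(v) has the form t b with t a border of s, so
  t \<alpha>(u) is a factor of m and t b a prefix of m, whence \<alpha>(u) \<le> b; and if b = \<alpha>(u),
  then s b itself is the longest candidate.\<close>

lemma lexordp_less_iff_ord_lexordp:
  fixes xs ys :: "'a::linorder list"
  shows "List.lexordp (<) xs ys \<longleftrightarrow> ord_class.lexordp xs ys"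
  by (simp add: List.lexordp_def lexordp_conv_lexord)

lemma prefix_tl_tl: "prefix xs ys \<Longrightarrow> prefix (tl xs) (tl ys)"
  by (cases xs) (auto simp: prefix_def)

lemma prefix_g: "prefix (g m u) m"
  and suffix_g: "suffix (g m u) u"
proof -
  have "prefix (ARG_MAX length x. prefix x m \<and> suffix x u) m \<and>
        suffix (ARG_MAX length x. prefix x m \<and> suffix x u) u"
    by (rule arg_max_natI[where k="[]" and b="Suc (length m)"]) (auto dest: prefix_length_le)
  then show "prefix (g m u) m" "suffix (g m u) u"
    by (simp_all add: g_def)
qed

lemma length_le_length_g:
  assumes "prefix x m" "suffix x u"
  shows "length x \<le> length (g m u)"
  unfolding g_def
  by (rule arg_max_nat_le[where b="Suc (length m)"]) (use assms in \<open>auto dest: prefix_length_le\<close>)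

lemma length_g_less:
  assumes "length u = length m" "u \<noteq> m"
  shows "length (g m u) < length m"
proof -
  have "length (g m u) \<noteq> length m"
  proof
    assume "length (g m u) = length m"
    then have "g m u = m" and "g m u = u"
      using prefix_g[of m u] suffix_g[of m u] assms(1)
      by (metis prefix_length_prefix prefix_order.antisym prefix_order.refl order_refl,
          metis suffix_length_suffix suffix_order.antisym suffix_order.refl order_refl)
    with assms(2) show False by simp
  qed
  with prefix_length_le[OF prefix_g] show ?thesis by (simp add: order_less_le)
qed

lemma prefix_g_snoc_alpha:
  assumes "length (g m u) < length m"
  shows "prefix (g m u @ [alpha m u]) m"
proof -
  have "g m u = take (length (g m u)) m"
    using prefix_g[of m u] by (metis append_eq_conv_conj prefix_def)
  with assms show ?thesis
    unfolding alpha_def by (metis take_Suc_conv_app_nth take_is_prefix)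
qed

lemma g_tl_snoc_cases:
  "g m (tl u @ [b]) = [] \<or>
   (\<exists>t. g m (tl u @ [b]) = t @ [b] \<and> prefix (t @ [b]) m \<and> suffix t (g m u))"
proof (cases "g m (tl u @ [b])")
  case (Cons c cs)
  then obtain t where t: "g m (tl u @ [b]) = t @ [b]" "suffix t (tl u)"
    using suffix_g[of m "tl u @ [b]"] by auto
  moreover have "prefix (t @ [b]) m" using t(1) prefix_g by metis
  moreover have "suffix t u" using t(2) suffix_tl suffix_order.trans by blast
  ultimately have "suffix t (g m u)"
    using suffix_length_suffix suffix_g length_le_length_g prefixI prefix_order.trans by metis
  with t \<open>prefix (t @ [b]) m\<close> show ?thesis by blast
qed simp

lemma suffix_g_tl:
  assumes "length (g m u) < length u"
  shows "suffix (g m u) (tl u)"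
  using suffix_length_suffix[OF suffix_g[of m u] suffix_tl] assms by simp

lemma g_tl_snoc_alpha:
  assumes "length (g m u) < length m" "length (g m u) < length u"
  shows "g m (tl u @ [alpha m u]) = g m u @ [alpha m u]"
proof -
  have "suffix (g m u @ [alpha m u]) (tl u @ [alpha m u])"
    using suffix_g_tl[OF assms(2)] by simp
  then have "length (g m u @ [alpha m u]) \<le> length (g m (tl u @ [alpha m u]))"
    by (rule length_le_length_g[OF prefix_g_snoc_alpha[OF assms(1)]])
  then obtain t where "g m (tl u @ [alpha m u]) = t @ [alpha m u]" "suffix t (g m u)"
      "length (g m u) \<le> length t"
    using g_tl_snoc_cases[of m u "alpha m u"] by auto
  then show ?thesis by (metis suffix_length_suffix suffix_order.antisym suffix_order.refl)
qed

lemma arc_eq_tl_snoc: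
  assumes "arc A F n u v" "n \<ge> 1"
  shows "v = tl u @ [last v]"
proof -
  have "v \<noteq> []" "tl u = butlast v" using assms unfolding arc_def vert_def by auto
  then show ?thesis by simp
qed

lemma scc_has_successor:
  assumes "scc A F n C" and "x \<in> C" "z \<in> C" "x \<noteq> z"
  shows "\<exists>y\<in>C. arc A F n x y"
proof -
  have sc: "strongly_connected_set A F n C"
    and maximal: "\<And>D. strongly_connected_set A F n D \<Longrightarrow> C \<subseteq> D \<Longrightarrow> D = C"
    using assms(1) unfolding scc_def by auto
  then have reach: "\<And>c d. c \<in> C \<Longrightarrow> d \<in> C \<Longrightarrow> (c, d) \<in> (arcs A F n)\<^sup>*"
    unfolding strongly_connected_set_def by auto
  obtain y where xy: "(x, y) \<in> arcs A F n" and yz: "(y, z) \<in> (arcs A F n)\<^sup>*"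
    using reach[OF assms(2,3)] assms(4) by (metis converse_rtranclE)
  have "strongly_connected_set A F n (insert y C)"
    unfolding strongly_connected_set_def
  proof (intro conjI ballI)
    show "insert y C \<subseteq> vert A n"
      using sc xy unfolding strongly_connected_set_def arcs_def arc_def by auto
    have "(c, y) \<in> (arcs A F n)\<^sup>*" "(y, c) \<in> (arcs A F n)\<^sup>*" if "c \<in> C" for c
      using reach[OF that assms(2)] reach[OF assms(3) that] xy yz
      by (meson rtrancl.rtrancl_into_rtrancl, meson rtrancl_trans)
    then show "(p, q) \<in> (arcs A F n)\<^sup>*" if "p \<in> insert y C" "q \<in> insert y C" for p q
      using that reach by auto
  qed
  then have "y \<in> C" using maximal by blast
  with xy show ?thesis unfolding arcs_def by auto
qed

lemma drop_is_prefix_in_successor_closed: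
  assumes succ: "\<forall>x\<in>C. \<exists>y\<in>C. arc A F n x y" and "x \<in> C"
  shows "\<exists>w\<in>C. prefix (drop k x) w"
proof (induction k)
  case 0
  then show ?case using assms(2) by auto
next
  case (Suc k)
  then obtain w where "w \<in> C" "prefix (drop k x) w" by blast
  moreover obtain y where "y \<in> C" "arc A F n w y" using succ \<open>w \<in> C\<close> by blast
  ultimately have "prefix (tl (drop k x)) (butlast y)"
    using prefix_tl_tl unfolding arc_def by metis
  then have "prefix (drop (Suc k) x) y"
    by (metis drop_Suc tl_drop prefix_order.trans prefixeq_butlast)
  with \<open>y \<in> C\<close> show ?case by blast
qed

lemma sublist_is_prefix_in_successor_closed:
  assumes "\<forall>x\<in>C. \<exists>y\<in>C. arc A F n x y" and "x \<in> C" and "sublist f x"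
  shows "\<exists>w\<in>C. prefix f w"
proof -
  obtain s where "suffix s x" "prefix f s" using assms(3) by (auto simp: sublist_altdef')
  then have "s = drop (length x - length s) x" by (metis suffix_take append_take_drop_id same_append_eq)
  then show ?thesis
    using drop_is_prefix_in_successor_closed[OF assms(1,2)] \<open>prefix f s\<close> prefix_order.trans by metis
qed

text \<open>If c > a, the word of C that begins with the factor p c exceeds m.\<close>
lemma letter_le_of_lex_max:
  fixes m :: "'a::linorder list"
  assumes succ: "\<forall>x\<in>C. \<exists>y\<in>C. arc A F n x y"
    and "m \<in> C" and max: "\<forall>x\<in>C. x \<noteq> m \<longrightarrow> List.lexordp (<) x m"
    and "x \<in> C" and "sublist (p @ [c]) x" and "prefix (p @ [a]) m"
  shows "c \<le> a"
proof (rule ccontr)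
  assume "\<not> c \<le> a"
  obtain w where "w \<in> C" "prefix (p @ [c]) w"
    using sublist_is_prefix_in_successor_closed[OF succ assms(4,5)] by blast
  then have "ord_class.lexordp m w"
    using \<open>\<not> c \<le> a\<close> \<open>prefix (p @ [a]) m\<close>
    by (auto simp: prefix_def intro: lexordp_append_left_rightI)
  moreover from this have "ord_class.lexordp w m"
    using max \<open>w \<in> C\<close> lexordp_less_iff_ord_lexordp by metis
  ultimately show False using lexordp_antisym by blast
qed

lemma g_tl_snoc_eq_Nil:
  fixes m :: "'a::linorder list"
  assumes succ: "\<forall>x\<in>C. \<exists>y\<in>C. arc A F n x y"
    and "m \<in> C" and "\<forall>x\<in>C. x \<noteq> m \<longrightarrow> List.lexordp (<) x m"
    and "length (g m u) < length m" and "b < alpha m u"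
  shows "g m (tl u @ [b]) = []"
proof (rule ccontr)
  assume "g m (tl u @ [b]) \<noteq> []"
  then obtain t where t_b: "prefix (t @ [b]) m" and "suffix t (g m u)"
    using g_tl_snoc_cases[of m u b] by blast
  then have "suffix (t @ [alpha m u]) (g m u @ [alpha m u])" by simp
  then have "sublist (t @ [alpha m u]) m"
    using prefix_g_snoc_alpha[OF assms(4)] sublist_altdef by blast
  then have "alpha m u \<le> b" using letter_le_of_lex_max[OF succ assms(2,3,2) _ t_b] by blast
  with assms(5) show False by simp
qed

theorem lemma3:
  fixes A :: "'a::linorder set" and F :: "'a list set" and n :: nat
    and C :: "'a list set" and m u v :: "'a list"
  assumes "finite A" and "n \<ge> 1"
    and "is_G A F n C"
    and "m \<in> C" and "\<forall>x\<in>C. x \<noteq> m \<longrightarrow> lexordp (<) x m"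
    and "u \<in> C" and "v \<in> C" and "arc A F n u v"
    and "u \<noteq> m" and "v \<noteq> m"
  shows "last v \<le> alpha m u \<and>
         (last v < alpha m u \<longrightarrow> g m v = []) \<and>
         (last v = alpha m u \<longrightarrow> g m v = g m u @ [last v])"
proof -
  have component: "scc A F n C" using assms(3) by (simp add: is_G_def)
  have succ: "\<forall>x\<in>C. \<exists>y\<in>C. arc A F n x y"
  proof
    fix x assume "x \<in> C"
    then show "\<exists>y\<in>C. arc A F n x y"
      using scc_has_successor[OF component] assms(4,6,9) by (cases "x = m") auto
  qed
  have "m \<in> vert A n" using component assms(4) by (auto simp: scc_def strongly_connected_set_def)
  then have "length u = length m" using assms(8) by (simp add: arc_def vert_def)
  then have short: "length (g m u) < length m" "length (g m u) < length u"
    using length_g_less assms(9) by auto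
  define b where "b = last v"
  have v_eq: "v = tl u @ [b]" using arc_eq_tl_snoc[OF assms(8,2)] by (simp add: b_def)
  have "suffix (g m u @ [b]) v" using suffix_g_tl[OF short(2)] v_eq by simp
  then have "b \<le> alpha m u"
    using letter_le_of_lex_max[OF succ assms(4,5,7) suffix_imp_sublist prefix_g_snoc_alpha[OF short(1)]]
    by blast
  moreover have "g m v = []" if "b < alpha m u"
    using g_tl_snoc_eq_Nil[OF succ assms(4,5) short(1) that] v_eq by simp
  moreover have "g m v = g m u @ [b]" if "b = alpha m u"
    using g_tl_snoc_alpha[OF short] v_eq that by simp
  ultimately show ?thesis unfolding b_def by blast
qed

end
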